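(* Let $\mu$ be a Borel probability measure on a finite-dimensional real Hilbert space $V$ with compact support $\Omega$, let $A\in\mathrm{hull}(\Omega)$, and let $\eta>0$, $\delta\in(0,1)$. Suppose $A$ is in the $(\eta,\delta)$-interior of $\mu$ and $Y^\star\in V_{\mathcal L}$ minimizes $F_A$ over $V_{\mathcal L}$. Then $\|Y^\star\|\le \frac{1}{\eta}\log\frac{1}{\delta}$.
   Context: $F_A(Y)=\langle Y,A\rangle+\log\int_\Omega e^{-\langle Y,X\rangle}d\mu(X)=\log\int_\Omega e^{-\langle Y,X-A\rangle}d\mu(X)$. $V_{\mathcal L}$ is the linear subspace parallel to the affine hull $\mathrm{aff}(\Omega)$. The $(0,\delta)$-interior of $\mu$ is the set of $A'\in\mathrm{hull}(\Omega)$ such that for every $Y\in V_{\mathcal L}$, $\mu(\{X\in\Omega:\langle X-A',Y\rangle\ge 0\})>\delta$. The $(\eta,\delta)$-interior of $\mu$ is the set of $A\in\mathrm{hull}(\Omega)$ such that every $A'\in\mathrm{aff}(\Omega)$ with $\|A'-A\|<\eta$ lies in the $(0,\delta)$-interior of $\mu$. *)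

theory Defs
  imports "HOL-Analysis.Analysis" "HOL-Probability.Probability"
begin

text \<open>Support of a Borel measure: the set of points every open ball around which has positive measure
  (the smallest closed set of full measure, in a separable metric space).\<close>
definition measure_support :: "'a::metric_space measure \<Rightarrow> 'a set" where
  "measure_support \<mu> = {x. \<forall>e>0. emeasure \<mu> (ball x e) > 0}"

definition parallel_subspace :: "'a::real_vector set \<Rightarrow> 'a set" where
  "parallel_subspace \<Omega> = {X - Z | X Z. X \<in> affine hull \<Omega> \<and> Z \<in> affine hull \<Omega>}"

definition F_fun :: "'a::euclidean_space measure \<Rightarrow> 'a \<Rightarrow> 'a \<Rightarrow> real" where
  "F_fun \<mu> A Y = ln (\<integral>X. exp (- (Y \<bullet> (X - A))) \<partial>\<mu>)"

definition zero_delta_interior :: "'a::euclidean_space measure \<Rightarrow> real \<Rightarrow> 'a set" where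
  "zero_delta_interior \<mu> \<delta> =
     {A'. A' \<in> convex hull (measure_support \<mu>) \<and>
          (\<forall>Y\<in>parallel_subspace (measure_support \<mu>).
             measure \<mu> {X \<in> measure_support \<mu>. (X - A') \<bullet> Y \<ge> 0} > \<delta>)}"

definition eta_delta_interior :: "'a::euclidean_space measure \<Rightarrow> real \<Rightarrow> real \<Rightarrow> 'a set" where
  "eta_delta_interior \<mu> \<eta> \<delta> =
     {A. A \<in> convex hull (measure_support \<mu>) \<and>
         (\<forall>A'\<in>affine hull (measure_support \<mu>). norm (A' - A) < \<eta> \<longrightarrow>
             A' \<in> zero_delta_interior \<mu> \<delta>)}"

end

theory Submission
  imports Defs
begin

text \<open>Minimality of \<open>Ystar\<close> against \<open>Y = 0\<close> gives \<open>\<integral> exp (-\<langle>Ystar, X - A\<rangle>) d\<mu> \<le> 1\<close>.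
  Shifting \<open>A\<close> by less than \<open>\<eta>\<close> against the direction of \<open>Ystar\<close> stays in the
  \<open>(0,\<delta>)\<close>-interior, so a set of mass greater than \<open>\<delta>\<close> lies in the half-space where the
  integrand is at least \<open>exp (t \<parallel>Ystar\<parallel>)\<close> for every \<open>t < \<eta>\<close>. Hence
  \<open>\<delta> exp (t \<parallel>Ystar\<parallel>) < 1\<close>, and letting \<open>t \<rightarrow> \<eta>\<close> gives the bound.\<close>

lemma AE_in_measure_support:
  fixes \<mu> :: "'a::{metric_space, second_countable_topology} measure"
  assumes sets: "sets \<mu> = sets borel"
  shows "AE x in \<mu>. x \<in> measure_support \<mu>"
proof -
  define \<F> where "\<F> = {ball x e | x e. e > 0 \<and> emeasure \<mu> (ball x e) = 0}"
  obtain \<F>' where \<F>': "\<F>' \<subseteq> \<F>" "countable \<F>'" "\<Union>\<F>' = \<Union>\<F>"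
    using Lindelof[of \<F>] unfolding \<F>_def by auto
  have "\<Union>\<F>' \<in> null_sets \<mu>"
  proof (rule null_sets_UN'[OF \<F>'(2), of id, simplified])
    fix B assume "B \<in> \<F>'"
    then obtain x e where "B = ball x e" "emeasure \<mu> (ball x e) = 0"
      using \<F>'(1) unfolding \<F>_def by auto
    then show "B \<in> null_sets \<mu>" using sets by auto
  qed
  moreover have "{x \<in> space \<mu>. x \<notin> measure_support \<mu>} \<subseteq> \<Union>\<F>'"
  proof
    fix x assume "x \<in> {x \<in> space \<mu>. x \<notin> measure_support \<mu>}"
    then obtain e where "e > 0" "emeasure \<mu> (ball x e) = 0"
      unfolding measure_support_def by (auto simp: zero_less_iff_neq_zero)
    then have "ball x e \<in> \<F>" unfolding \<F>_def by auto
    with \<open>e > 0\<close> show "x \<in> \<Union>\<F>'" using \<F>'(3) by (metis UnionI centre_in_ball)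
  qed
  ultimately show ?thesis by (rule AE_I')
qed

lemma integrable_continuous_compact_support:
  fixes \<mu> :: "'a::{metric_space, second_countable_topology} measure"
    and f :: "'a \<Rightarrow> 'b::{banach, second_countable_topology}"
  assumes "finite_measure \<mu>" "sets \<mu> = sets borel" "compact (measure_support \<mu>)"
    and "continuous_on UNIV f"
  shows "integrable \<mu> f"
proof -
  interpret finite_measure \<mu> by fact
  have "compact (f ` measure_support \<mu>)"
    using assms(3,4) by (meson compact_continuous_image continuous_on_subset subset_UNIV)
  then obtain B where B: "\<forall>x\<in>measure_support \<mu>. norm (f x) \<le> B"
    by (auto dest!: compact_imp_bounded simp: bounded_iff)
  show ?thesis
  proof (rule integrable_const_bound)
    show "AE x in \<mu>. norm (f x) \<le> B"
      using AE_in_measure_support[OF assms(2)] by eventually_elim (use B in blast)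
    show "f \<in> borel_measurable \<mu>"
      using borel_measurable_continuous_onI[OF assms(4)] measurable_cong_sets[OF assms(2) refl]
      by blast
  qed
qed

lemma affine_hull_add_parallel_subspace:
  assumes "A \<in> affine hull S" "Y \<in> parallel_subspace S"
  shows "A + c *\<^sub>R Y \<in> affine hull S"
proof -
  obtain X Z where "Y = X - Z" "X \<in> affine hull S" "Z \<in> affine hull S"
    using assms(2) unfolding parallel_subspace_def by auto
  then show ?thesis
    using mem_affine_3_minus2[OF affine_affine_hull assms(1), of X Z "- c"] by simp
qed

lemma scaleR_parallel_subspace:
  assumes "A \<in> affine hull S" "Y \<in> parallel_subspace S"
  shows "c *\<^sub>R Y \<in> parallel_subspace S"
  using affine_hull_add_parallel_subspace[OF assms, of c] assms(1)
  unfolding parallel_subspace_def by force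

lemma F_fun_zero:
  assumes "prob_space \<mu>"
  shows "F_fun \<mu> A 0 = 0"
  using prob_space.prob_space[OF assms] by (simp add: F_fun_def)

lemma eta_delta_interior_tilted_integral_gt:
  fixes \<mu> :: "'a::euclidean_space measure"
  assumes "finite_measure \<mu>" "sets \<mu> = sets borel" "compact (measure_support \<mu>)"
    and A: "A \<in> eta_delta_interior \<mu> \<eta> \<delta>"
    and Y: "Y \<in> parallel_subspace (measure_support \<mu>)"
    and t: "0 \<le> t" "t < \<eta>"
  shows "\<delta> * exp (t * norm Y) < (\<integral>X. exp (- (Y \<bullet> (X - A))) \<partial>\<mu>)"
proof -
  interpret finite_measure \<mu> by fact
  let ?S = "measure_support \<mu>"
  let ?f = "\<lambda>X. exp (- (Y \<bullet> (X - A)))"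
  let ?c = "exp (t * norm Y)"
  \<comment> \<open>Since \<open>sgn 0 = 0\<close>, the case \<open>Y = 0\<close> needs no separate argument.\<close>
  define u where "u = sgn Y"
  define A' where "A' = A - t *\<^sub>R u"
  have A_hull: "A \<in> affine hull ?S"
    using A convex_hull_subset_affine_hull unfolding eta_delta_interior_def by blast
  have "A' = A + (- (t / norm Y)) *\<^sub>R Y"
    by (simp add: A'_def u_def sgn_div_norm divide_inverse_commute)
  then have "A' \<in> affine hull ?S"
    by (simp only: affine_hull_add_parallel_subspace[OF A_hull Y])
  moreover have "norm (A' - A) < \<eta>"
    using t by (simp add: A'_def u_def norm_sgn)
  ultimately have A'_int: "A' \<in> zero_delta_interior \<mu> \<delta>"
    using A unfolding eta_delta_interior_def by blast
  have "- u \<in> parallel_subspace ?S"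
    using scaleR_parallel_subspace[OF A_hull Y, of "- inverse (norm Y)"]
    by (simp add: u_def sgn_div_norm)
  with A'_int have mass: "\<delta> < measure \<mu> {X \<in> ?S. (X - A') \<bullet> (- u) \<ge> 0}"
    unfolding zero_delta_interior_def by blast
  have integrable: "integrable \<mu> ?f"
    by (rule integrable_continuous_compact_support[OF assms(1-3)]) (intro continuous_intros)
  have [measurable]: "?f \<in> borel_measurable \<mu>"
    using integrable by (rule borel_measurable_integrable)
  have "{X \<in> ?S. (X - A') \<bullet> (- u) \<ge> 0} \<subseteq> {X \<in> space \<mu>. ?c \<le> ?f X}"
  proof clarify
    fix X assume "0 \<le> (X - A') \<bullet> (- u)"
    then have "u \<bullet> (X - A) \<le> - t * (u \<bullet> u)"
      by (simp add: A'_def inner_diff_left inner_diff_right inner_commute)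
    have "Y \<bullet> (X - A) = norm Y * (u \<bullet> (X - A))"
      by (cases "Y = 0") (simp_all add: u_def sgn_div_norm)
    also have "\<dots> \<le> norm Y * (- t * (u \<bullet> u))"
      by (rule mult_left_mono[OF \<open>u \<bullet> (X - A) \<le> - t * (u \<bullet> u)\<close> norm_ge_zero])
    also have "\<dots> = - (t * norm Y)"
      by (cases "Y = 0") (simp_all add: u_def dot_square_norm norm_sgn)
    finally show "X \<in> space \<mu> \<and> ?c \<le> ?f X"
      using sets_eq_imp_space_eq[OF assms(2)] by simp
  qed
  then have "measure \<mu> {X \<in> ?S. (X - A') \<bullet> (- u) \<ge> 0} \<le> measure \<mu> {X \<in> space \<mu>. ?c \<le> ?f X}"
    by (rule finite_measure_mono) measurable
  also have "\<dots> \<le> (\<integral>X. ?f X \<partial>\<mu>) / ?c"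
    by (rule integral_Markov_inequality_measure[OF integrable sets.top]) simp_all
  finally have "\<delta> < (\<integral>X. ?f X \<partial>\<mu>) / ?c"
    using mass by linarith
  then show ?thesis
    by (simp add: pos_less_divide_eq)
qed

lemma le_of_forall_less_mult:
  fixes \<eta> N L :: real
  assumes "0 < \<eta>" "0 \<le> N" "\<And>t. 0 \<le> t \<Longrightarrow> t < \<eta> \<Longrightarrow> t * N < L"
  shows "\<eta> * N \<le> L"
proof (cases "N = 0")
  case True
  then show ?thesis using assms(1) assms(3)[of 0] by simp
next
  case False
  have "\<eta> \<le> L / N"
    by (rule dense_le_bounded[OF assms(1)])
      (use assms(2,3) False in \<open>auto simp: pos_le_divide_eq less_imp_le\<close>)
  then show ?thesis using assms(2) False by (simp add: pos_le_divide_eq mult.commute)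
qed

theorem mainTheorem3:
  fixes \<mu> :: "'a::euclidean_space measure"
    and A Ystar :: 'a and \<eta> \<delta> :: real
  assumes "prob_space \<mu>"
    and "sets \<mu> = sets borel"
    and "compact (measure_support \<mu>)"
    and "A \<in> convex hull (measure_support \<mu>)"
    and "\<eta> > 0" and "0 < \<delta>" and "\<delta> < 1"
    and "A \<in> eta_delta_interior \<mu> \<eta> \<delta>"
    and "Ystar \<in> parallel_subspace (measure_support \<mu>)"
    and "\<forall>Y\<in>parallel_subspace (measure_support \<mu>). F_fun \<mu> A Ystar \<le> F_fun \<mu> A Y"
  shows "norm Ystar \<le> (1 / \<eta>) * ln (1 / \<delta>)"
proof -
  define I where "I = (\<integral>X. exp (- (Ystar \<bullet> (X - A))) \<partial>\<mu>)"
  have finite: "finite_measure \<mu>"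
    using assms(1) by (rule prob_space.finite_measure)
  have tilt: "\<delta> * exp (t * norm Ystar) < I" if "0 \<le> t" "t < \<eta>" for t
    using eta_delta_interior_tilted_integral_gt[OF finite assms(2,3,8,9) that] by (simp add: I_def)
  have "A \<in> affine hull (measure_support \<mu>)"
    using assms(4) convex_hull_subset_affine_hull by blast
  from scaleR_parallel_subspace[OF this assms(9), of 0]
  have "F_fun \<mu> A Ystar \<le> F_fun \<mu> A 0"
    using assms(10) by simp
  then have "ln I \<le> 0"
    by (simp add: F_fun_zero[OF assms(1)]) (simp add: F_fun_def I_def)
  moreover have "0 < I"
    using tilt[of 0] assms(5,6) by simp
  ultimately have "I \<le> 1" by simp
  have "t * norm Ystar < ln (1 / \<delta>)" if "0 \<le> t" "t < \<eta>" for t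
  proof -
    have "exp (t * norm Ystar) < 1 / \<delta>"
      using tilt[OF that] \<open>I \<le> 1\<close> assms(6) by (simp add: pos_less_divide_eq mult.commute)
    then show ?thesis
      using ln_less_cancel_iff[of "exp (t * norm Ystar)" "1 / \<delta>"] assms(6) by simp
  qed
  then have "\<eta> * norm Ystar \<le> ln (1 / \<delta>)"
    using le_of_forall_less_mult[OF assms(5)] by simp
  then show ?thesis using assms(5) by (simp add: field_simps)
qed

end
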